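(* Let $g\in\mathcal P$ be continuously differentiable on $(a_g,b_g)$, let $\alpha\in[0,1)$ and assume $g'(x)<\alpha$ for all $x\in(a_g,b_g)$. Then $\mathrm{gr}(g)$ is stable under the shaking $\mathrm{Sh}_\alpha$, i.e. $\mathrm{Sh}_\alpha(\mathrm{gr}(g))=\mathrm{gr}(g)$.
   Context: $\mathcal P$ is the set of continuous $g:\mathbb R\to\mathbb R$ with $g(x)\ge|x|$ for all $x$, $g(x)=|x|$ for $|x|$ large, and $g(x_0)\ne|x_0|$ for some $x_0$. For $g\in\mathcal P$: $a_g=\inf\{x:g(x)\ne|x|\}$, $b_g=\sup\{x:g(x)\ne|x|\}$, $\mathrm{gr}(g)=\{(x,y)\in[a_g,b_g]\times\mathbb R_{\ge0}:|x|\le y\le g(x)\}$. Shaking of sets: let $D$ be the line $y=-x$ and $v_\alpha$ the unit vector positively collinear to $(1,\alpha)$. For compact $K\subseteq\mathbb R^2$, $\mathrm{Sh}_\alpha(K)=\bigcup_{p\in D}K^p$, where $K^p=\emptyset$ if $K\cap(p+\mathbb Rv_\alpha)=\emptyset$ and otherwise $K^p$ is the segment from $p$ to $p+|K\cap(p+\mathbb Rv_\alpha)|\,v_\alpha$, with $|\cdot|$ the one-dimensional Lebesgue measure on the line. *)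

theory Defs
  imports "HOL-Analysis.Analysis"
begin

definition classP :: "(real \<Rightarrow> real) set" where
  "classP = {g. continuous_on UNIV g \<and> (\<forall>x. g x \<ge> \<bar>x\<bar>)
      \<and> (\<exists>R. \<forall>x. \<bar>x\<bar> \<ge> R \<longrightarrow> g x = \<bar>x\<bar>)
      \<and> (\<exists>x0. g x0 \<noteq> \<bar>x0\<bar>)}"

definition a_of :: "(real \<Rightarrow> real) \<Rightarrow> real" where
  "a_of g = Inf {x. g x \<noteq> \<bar>x\<bar>}"

definition b_of :: "(real \<Rightarrow> real) \<Rightarrow> real" where
  "b_of g = Sup {x. g x \<noteq> \<bar>x\<bar>}"

definition gr :: "(real \<Rightarrow> real) \<Rightarrow> (real \<times> real) set" where
  "gr g = {(x, y). a_of g \<le> x \<and> x \<le> b_of g \<and> 0 \<le> y \<and> \<bar>x\<bar> \<le> y \<and> y \<le> g x}"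

definition lineD :: "(real \<times> real) set" where
  "lineD = {p. snd p = - fst p}"

definition vdir :: "real \<Rightarrow> real \<times> real" where
  "vdir \<alpha> = (1 / sqrt (1 + \<alpha>\<^sup>2)) *\<^sub>R (1, \<alpha>)"

text \<open>One-dimensional Lebesgue measure of K on the line p + R v (v a unit vector),
  computed through the arc-length parametrisation t \<mapsto> p + t v.\<close>
definition fiber_len :: "(real \<times> real) set \<Rightarrow> real \<Rightarrow> real \<times> real \<Rightarrow> real" where
  "fiber_len K \<alpha> p = measure lborel {t::real. p + t *\<^sub>R vdir \<alpha> \<in> K}"

definition fiber :: "(real \<times> real) set \<Rightarrow> real \<Rightarrow> real \<times> real \<Rightarrow> (real \<times> real) set" where
  "fiber K \<alpha> p =
     (if K \<inter> {p + t *\<^sub>R vdir \<alpha> | t. True} = {} then {}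
      else closed_segment p (p + fiber_len K \<alpha> p *\<^sub>R vdir \<alpha>))"

definition shaking :: "real \<Rightarrow> (real \<times> real) set \<Rightarrow> (real \<times> real) set" where
  "shaking \<alpha> K = (\<Union>p\<in>lineD. fiber K \<alpha> p)"

end

theory Submission
  imports Defs
begin

text \<open>
  Put \<phi>(x) = g(x) - \<alpha> x. Since g' < \<alpha>, \<phi> is non-increasing on [a_g, b_g], and
  comparing \<phi>(a_g) with \<phi>(b_g) shows a_g < 0. On the ray from (s, -s) \<in> D in direction (1, \<alpha>)
  the quantity y - \<alpha> x equals -(1 + \<alpha>) s, so the constraint y \<le> g(x) becomes
  \<phi>(x) \<ge> -(1 + \<alpha>) s and holds on an initial piece of the ray; as \<alpha> < 1 the same is true of
  |x| \<le> y, and \<phi>(a_g) \<ge> \<phi>(x) forces s \<ge> a_g. Hence every fibre of gr(g) in direction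
  (1, \<alpha>) is a segment starting on D, which is exactly what shaking replaces it by.
\<close>

definition fiber_params :: "(real \<times> real) set \<Rightarrow> real \<Rightarrow> real \<times> real \<Rightarrow> real set" where
  "fiber_params K \<alpha> p = {t. p + t *\<^sub>R vdir \<alpha> \<in> K}"

lemma closed_segment_ray:
  fixes p v :: "'a::real_vector"
  assumes "0 \<le> L"
  shows "closed_segment p (p + L *\<^sub>R v) = (\<lambda>t. p + t *\<^sub>R v) ` {0..L}"
proof -
  have "closed_segment p (p + L *\<^sub>R v) = (\<lambda>x. p + x) ` closed_segment (0 *\<^sub>R v) (L *\<^sub>R v)"
    using closed_segment_translation[of p 0 "L *\<^sub>R v"] by simp
  also have "closed_segment (0 *\<^sub>R v) (L *\<^sub>R v) = (\<lambda>t. t *\<^sub>R v) ` closed_segment 0 L"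
    by (rule closed_segment_linear_image) (rule linear_scaleR_left)
  finally show ?thesis
    using assms by (simp add: closed_segment_eq_real_ivl image_image)
qed

lemma fiber_eq_image_fiber_params:
  assumes "fiber_params K \<alpha> p = {} \<or> (\<exists>L\<ge>0. fiber_params K \<alpha> p = {0..L})"
  shows "fiber K \<alpha> p = (\<lambda>t. p + t *\<^sub>R vdir \<alpha>) ` fiber_params K \<alpha> p"
proof (cases "fiber_params K \<alpha> p = {}")
  case True
  then have "K \<inter> {p + t *\<^sub>R vdir \<alpha> | t. True} = {}"
    by (auto simp: fiber_params_def)
  with True show ?thesis
    by (simp add: fiber_def)
next
  case False
  with assms obtain L where "L \<ge> 0" and L: "fiber_params K \<alpha> p = {0..L}"
    by blast
  moreover have "K \<inter> {p + t *\<^sub>R vdir \<alpha> | t. True} \<noteq> {}"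
    using False by (auto simp: fiber_params_def)
  moreover have "fiber_len K \<alpha> p = L"
    using L \<open>L \<ge> 0\<close> by (simp add: fiber_len_def fiber_params_def[symmetric])
  ultimately show ?thesis
    by (simp add: fiber_def closed_segment_ray)
qed

lemma lineD_ray_eq:
  "(s, - s) + t *\<^sub>R vdir \<alpha> = (s + t / sqrt (1 + \<alpha>\<^sup>2), - s + \<alpha> * (t / sqrt (1 + \<alpha>\<^sup>2)))"
  by (simp add: vdir_def)

lemma lineD_ray_cover:
  assumes "\<alpha> \<noteq> -1"
  obtains s t where "q = (s, -s) + t *\<^sub>R vdir \<alpha>"
proof -
  obtain x y where q: "q = (x, y)"
    by (cases q)
  define u where "u = (x + y) / (1 + \<alpha>)"
  have "1 + \<alpha> \<noteq> 0"
    using assms by linarith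
  then have "u * (1 + \<alpha>) = x + y"
    by (simp add: u_def)
  then have "- (x - u) + \<alpha> * u = y"
    by (simp add: algebra_simps)
  moreover have "sqrt (1 + \<alpha>\<^sup>2) > 0"
    by (simp add: add_pos_nonneg)
  ultimately have "q = (x - u, - (x - u)) + (u * sqrt (1 + \<alpha>\<^sup>2)) *\<^sub>R vdir \<alpha>"
    unfolding q lineD_ray_eq by simp
  then show ?thesis
    by (rule that)
qed

lemma shaking_eq_self:
  assumes "\<alpha> \<noteq> -1"
    and fibers: "\<And>s. fiber_params K \<alpha> (s, -s) = {} \<or> (\<exists>L\<ge>0. fiber_params K \<alpha> (s, -s) = {0..L})"
  shows "shaking \<alpha> K = K"
proof
  show "shaking \<alpha> K \<subseteq> K"
  proof
    fix q assume "q \<in> shaking \<alpha> K"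
    then obtain p where "p \<in> lineD" and q: "q \<in> fiber K \<alpha> p"
      by (auto simp: shaking_def)
    then obtain s where "p = (s, -s)"
      by (cases p) (auto simp: lineD_def)
    with q have "q \<in> (\<lambda>t. p + t *\<^sub>R vdir \<alpha>) ` fiber_params K \<alpha> p"
      using fiber_eq_image_fiber_params[OF fibers] by simp
    then show "q \<in> K"
      by (auto simp: fiber_params_def)
  qed
  show "K \<subseteq> shaking \<alpha> K"
  proof
    fix q assume "q \<in> K"
    obtain s t where q: "q = (s, -s) + t *\<^sub>R vdir \<alpha>"
      using lineD_ray_cover[OF assms(1)] .
    with \<open>q \<in> K\<close> have "t \<in> fiber_params K \<alpha> (s, -s)"
      by (simp add: fiber_params_def)
    then have "q \<in> fiber K \<alpha> (s, -s)"
      unfolding fiber_eq_image_fiber_params[OF fibers] q by (rule imageI)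
    moreover have "(s, -s) \<in> lineD"
      by (simp add: lineD_def)
    ultimately show "q \<in> shaking \<alpha> K"
      by (auto simp: shaking_def)
  qed
qed

lemma closed_down_closed_eq_atLeastAtMost:
  fixes S :: "real set"
  assumes "closed S" "bdd_above S" "S \<noteq> {}" "S \<subseteq> {0..}"
    and down: "\<And>t. t \<in> S \<Longrightarrow> {0..t} \<subseteq> S"
  shows "\<exists>L\<ge>0. S = {0..L}"
proof (intro exI conjI)
  have "Sup S \<in> S"
    using closed_contains_Sup[OF assms(3,2,1)] .
  then show "0 \<le> Sup S"
    using assms(4) by auto
  show "S = {0..Sup S}"
    using \<open>Sup S \<in> S\<close> down assms(2,4) by (auto intro: cSup_upper)
qed

lemma classP_endpoints:
  assumes "g \<in> classP"
  shows "a_of g < b_of g" "g (a_of g) = \<bar>a_of g\<bar>" "g (b_of g) = \<bar>b_of g\<bar>"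
proof -
  define S where "S = {x. g x \<noteq> \<bar>x\<bar>}"
  have "continuous_on UNIV g"
    using assms by (simp add: classP_def)
  then have "open S"
    unfolding S_def by (intro open_Collect_neq continuous_intros) auto
  obtain R where "\<And>x. \<bar>x\<bar> \<ge> R \<Longrightarrow> g x = \<bar>x\<bar>"
    using assms by (auto simp: classP_def)
  then have bounds: "\<forall>x\<in>S. - R - 1 < x" "\<forall>x\<in>S. x < R + 1"
    by (force simp: S_def)+
  obtain x0 where "x0 \<in> S"
    using assms by (auto simp: classP_def S_def)
  have bdd: "bdd_below S" "bdd_above S"
    using bounds by (meson bdd_belowI bdd_aboveI less_imp_le)+
  have "Inf S \<notin> S" "Sup S \<notin> S"
    using Inf_notin_open[OF \<open>open S\<close> bounds(1)] Sup_notin_open[OF \<open>open S\<close> bounds(2)] .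
  moreover have "Inf S \<le> x0" "x0 \<le> Sup S"
    using \<open>x0 \<in> S\<close> bdd by (auto intro: cInf_lower cSup_upper)
  ultimately have "Inf S < Sup S"
    using \<open>x0 \<in> S\<close> by (metis order.not_eq_order_implies_strict order.strict_trans2)
  with \<open>Inf S \<notin> S\<close> \<open>Sup S \<notin> S\<close> show "a_of g < b_of g" "g (a_of g) = \<bar>a_of g\<bar>" "g (b_of g) = \<bar>b_of g\<bar>"
    by (simp_all add: a_of_def b_of_def S_def)
qed

lemma deriv_le_imp_antimono_on_diff_linear:
  fixes g :: "real \<Rightarrow> real"
  assumes "continuous_on {a..b} g"
    and "\<forall>x\<in>{a<..<b}. g differentiable (at x)"
    and "\<forall>x\<in>{a<..<b}. deriv g x \<le> \<alpha>"
  shows "antimono_on {a..b} (\<lambda>x. g x - \<alpha> * x)"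
proof (rule monotone_onI)
  fix x y assume "x \<in> {a..b}" "y \<in> {a..b}" "x \<le> y"
  show "g y - \<alpha> * y \<le> g x - \<alpha> * x"
  proof (rule DERIV_nonpos_imp_decreasing_open[OF \<open>x \<le> y\<close>])
    fix z assume "x < z" "z < y"
    then have "z \<in> {a<..<b}"
      using \<open>x \<in> {a..b}\<close> \<open>y \<in> {a..b}\<close> by auto
    then have "DERIV g z :> deriv g z"
      using assms(2) by (simp add: DERIV_deriv_iff_real_differentiable)
    then have "((\<lambda>x. g x - \<alpha> * x) has_real_derivative deriv g z - \<alpha>) (at z)"
      by (auto intro!: derivative_eq_intros)
    with \<open>z \<in> {a<..<b}\<close> assms(3) show "\<exists>d. ((\<lambda>x. g x - \<alpha> * x) has_real_derivative d) (at z) \<and> d \<le> 0"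
      by auto
  next
    have "{x..y} \<subseteq> {a..b}"
      using \<open>x \<in> {a..b}\<close> \<open>y \<in> {a..b}\<close> by auto
    then show "continuous_on {x..y} (\<lambda>x. g x - \<alpha> * x)"
      using assms(1) by (auto intro!: continuous_intros elim: continuous_on_subset)
  qed
qed

lemma closed_gr:
  assumes "continuous_on UNIV g"
  shows "closed (gr g)"
proof -
  have "continuous_on UNIV (\<lambda>p. g (fst p))"
    by (rule continuous_on_compose2[OF assms]) (auto intro: continuous_intros)
  then show ?thesis
    unfolding gr_def case_prod_unfold
    by (intro closed_Collect_conj closed_Collect_le continuous_intros) auto
qed

lemma gr_ray_down_closed:
  fixes g :: "real \<Rightarrow> real"
  assumes "a_of g < 0" "g (a_of g) = - a_of g"
    and phi: "antimono_on {a_of g..b_of g} (\<lambda>x. g x - \<alpha> * x)"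
    and "0 \<le> \<alpha>" "\<alpha> < 1"
    and mem: "(s + u, - s + \<alpha> * u) \<in> gr g"
  shows "0 \<le> u" and "\<And>v. 0 \<le> v \<Longrightarrow> v \<le> u \<Longrightarrow> (s + v, - s + \<alpha> * v) \<in> gr g"
proof -
  define a b where "a = a_of g" and "b = b_of g"
  have in_ab: "a \<le> s + u" "s + u \<le> b"
    and above_abs: "\<bar>s + u\<bar> \<le> - s + \<alpha> * u"
    and below_g: "- s + \<alpha> * u \<le> g (s + u)"
    using mem by (auto simp: gr_def a_def b_def)
  have "(1 + \<alpha>) * u \<ge> 0"
    using above_abs by (simp add: algebra_simps abs_le_iff)
  then show "0 \<le> u"
    using \<open>0 \<le> \<alpha>\<close> by (simp add: zero_le_mult_iff)
  have phi_le: "g y - \<alpha> * y \<le> g x - \<alpha> * x" if "a \<le> x" "x \<le> y" "y \<le> b" for x y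
    using monotone_onD[OF phi, of x y] that by (simp add: a_def b_def)
  have "(1 + \<alpha>) * a \<le> (1 + \<alpha>) * s"
    using phi_le[of a "s + u"] in_ab below_g \<open>g (a_of g) = - a_of g\<close>
    by (simp add: a_def algebra_simps)
  then have "a \<le> s"
    using \<open>0 \<le> \<alpha>\<close> by simp
  fix v assume "0 \<le> v" "v \<le> u"
  have "a \<le> s + v" "s + v \<le> b"
    using \<open>a \<le> s\<close> \<open>0 \<le> v\<close> \<open>v \<le> u\<close> in_ab by auto
  moreover have "\<bar>s + v\<bar> \<le> - s + \<alpha> * v"
  proof (cases "s + v \<le> 0")
    case True
    then show ?thesis
      using mult_nonneg_nonneg[OF \<open>0 \<le> \<alpha>\<close> \<open>0 \<le> v\<close>] \<open>0 \<le> v\<close> by linarith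
  next
    case False
    have "(1 - \<alpha>) * v \<le> (1 - \<alpha>) * u"
      using \<open>v \<le> u\<close> \<open>\<alpha> < 1\<close> by simp
    with False above_abs show ?thesis
      by (simp add: algebra_simps abs_le_iff)
  qed
  moreover have "- s + \<alpha> * v \<le> g (s + v)"
    using phi_le[of "s + v" "s + u"] \<open>a \<le> s + v\<close> \<open>v \<le> u\<close> in_ab below_g
    by (simp add: algebra_simps)
  ultimately show "(s + v, - s + \<alpha> * v) \<in> gr g"
    by (auto simp: gr_def a_def b_def)
qed

lemma a_of_neg:
  fixes g :: "real \<Rightarrow> real"
  assumes "g \<in> classP"
    and phi: "antimono_on {a_of g..b_of g} (\<lambda>x. g x - \<alpha> * x)"
    and "\<alpha> < 1"
  shows "a_of g < 0"
proof (rule ccontr)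
  assume "\<not> a_of g < 0"
  then have "g (a_of g) = a_of g" "g (b_of g) = b_of g" "a_of g < b_of g"
    using classP_endpoints[OF assms(1)] by auto
  moreover have "g (b_of g) - \<alpha> * b_of g \<le> g (a_of g) - \<alpha> * a_of g"
    using monotone_onD[OF phi] \<open>a_of g < b_of g\<close> by simp
  ultimately have "(1 - \<alpha>) * b_of g \<le> (1 - \<alpha>) * a_of g"
    by (simp add: algebra_simps)
  with \<open>a_of g < b_of g\<close> \<open>\<alpha> < 1\<close> show False
    by simp
qed

lemma fiber_params_gr_eq_atLeastAtMost:
  fixes g :: "real \<Rightarrow> real"
  assumes "g \<in> classP"
    and phi: "antimono_on {a_of g..b_of g} (\<lambda>x. g x - \<alpha> * x)"
    and "0 \<le> \<alpha>" "\<alpha> < 1"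
  shows "fiber_params (gr g) \<alpha> (s, - s) = {} \<or> (\<exists>L\<ge>0. fiber_params (gr g) \<alpha> (s, - s) = {0..L})"
proof (cases "fiber_params (gr g) \<alpha> (s, - s) = {}")
  case False
  define T where "T = fiber_params (gr g) \<alpha> (s, - s)"
  define c where "c = sqrt (1 + \<alpha>\<^sup>2)"
  have "c > 0"
    unfolding c_def by (simp add: add_pos_nonneg)
  have T_eq: "T = {t. (s + t / c, - s + \<alpha> * (t / c)) \<in> gr g}"
    by (simp add: T_def fiber_params_def lineD_ray_eq c_def)
  have a_neg: "a_of g < 0"
    using a_of_neg[OF assms(1) phi \<open>\<alpha> < 1\<close>] .
  have "g (a_of g) = - a_of g"
    using classP_endpoints(2)[OF assms(1)] a_neg by simp
  note ray = gr_ray_down_closed[OF a_neg this phi \<open>0 \<le> \<alpha>\<close> \<open>\<alpha> < 1\<close>]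
  have "\<exists>L\<ge>0. T = {0..L}"
  proof (rule closed_down_closed_eq_atLeastAtMost)
    have "continuous_on UNIV g"
      using assms(1) by (simp add: classP_def)
    have "closed ((\<lambda>t. (s, - s) + t *\<^sub>R vdir \<alpha>) -` gr g)"
      by (intro continuous_closed_vimage closed_gr[OF \<open>continuous_on UNIV g\<close>] continuous_intros)
    then show "closed T"
      by (simp add: T_def fiber_params_def vimage_def)
    have "t \<le> c * (b_of g - s)" if "t \<in> T" for t
    proof -
      have "t / c \<le> b_of g - s"
        using that by (simp add: T_eq gr_def)
      with \<open>c > 0\<close> show ?thesis
        by (simp add: pos_divide_le_eq mult.commute)
    qed
    then show "bdd_above T"
      by (rule bdd_aboveI)
    show "T \<noteq> {}"
      using False by (simp add: T_def)
    show "T \<subseteq> {0..}"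
    proof
      fix t assume "t \<in> T"
      then have "0 \<le> t / c"
        using ray(1)[of s "t / c"] by (simp add: T_eq)
      with \<open>c > 0\<close> show "t \<in> {0..}"
        by (simp add: zero_le_divide_iff)
    qed
    show "{0..t} \<subseteq> T" if "t \<in> T" for t
    proof
      fix t' assume "t' \<in> {0..t}"
      then have "0 \<le> t' / c" "t' / c \<le> t / c"
        using \<open>c > 0\<close> by (auto simp: divide_right_mono)
      then show "t' \<in> T"
        using ray(2)[of s "t / c" "t' / c"] \<open>t \<in> T\<close> by (simp add: T_eq)
    qed
  qed
  then show ?thesis
    by (simp add: T_def)
qed simp

theorem lemma4p4:
  fixes g :: "real \<Rightarrow> real" and \<alpha> :: real
  assumes "g \<in> classP"
    and "\<forall>x\<in>{a_of g<..<b_of g}. g differentiable (at x)"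
    and "continuous_on {a_of g<..<b_of g} (deriv g)"
    and "0 \<le> \<alpha>" and "\<alpha> < 1"
    and "\<forall>x\<in>{a_of g<..<b_of g}. deriv g x < \<alpha>"
  shows "shaking \<alpha> (gr g) = gr g"
proof -
  have "continuous_on {a_of g..b_of g} g"
    using assms(1) by (auto simp: classP_def elim: continuous_on_subset)
  then have phi: "antimono_on {a_of g..b_of g} (\<lambda>x. g x - \<alpha> * x)"
    using assms(2,6) by (intro deriv_le_imp_antimono_on_diff_linear) (auto intro: less_imp_le)
  have "\<alpha> \<noteq> -1"
    using assms(4) by simp
  then show ?thesis
    by (rule shaking_eq_self) (rule fiber_params_gr_eq_atLeastAtMost[OF assms(1) phi assms(4,5)])
qed

end
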